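(* Let $\mathcal{H}$ be a $d$-dimensional Hilbert space, let $\mathcal{D}(\mathcal{H})$ denote the set of density operators on $\mathcal{H}$, and let $\mathcal{H}_{\mathrm{anc}}\cong\mathcal{H}$ be the Hilbert space of an ancillary system. Suppose the classical pure states $\{|\chi_i\rangle\}_{i=1}^d\subset\mathcal{H}$ form a linearly independent set spanning $\mathcal{H}$. Then there exists an isometry $\Gamma:\mathcal{H}\to\mathcal{H}\otimes\mathcal{H}_{\mathrm{anc}}$ such that for every $\rho\in\mathcal{D}(\mathcal{H})$, $$\mathrm{NN}(\rho)=\mathrm{SN}(\Gamma\rho\Gamma^\dagger),$$ where the Schmidt number is taken with respect to the bipartition $\mathcal{H}\,|\,\mathcal{H}_{\mathrm{anc}}$.
   Context: Given a finite set of "classical" pure states $\{|\chi_i\rangle\}$ spanning $\mathcal{H}$, the nonclassical rank of a pure state $|\psi\rangle$ is $\mathrm{NR}(|\psi\rangle)=\min\{r : |\psi\rangle=\sum_{i=1}^r c_i|\chi_i\rangle,\ c_i\in\mathbb{C}\setminus\{0\}\}$ (the minimal number of classical states needed to write $|\psi\rangle$ as a superposition). The nonclassical number of a mixed state is $\mathrm{NN}(\rho)=\min_{\{p_i,|\psi_i\rangle\}}\max_i \mathrm{NR}(|\psi_i\rangle)$, the minimum being over all pure-state convex decompositions $\rho=\sum_i p_i|\psi_i\rangle\langle\psi_i|$. The Schmidt number of a bipartite state is $\mathrm{SN}(\rho)=\min_{\{p_i,|\psi_i\rangle\}}\max_i\mathrm{SR}(|\psi_i\rangle)$, with $\mathrm{SR}$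 the Schmidt rank and the minimum over pure-state decompositions of $\rho$. *)

theory Defs
  imports Complex_Main
begin

text \<open>The d-dimensional Hilbert space H is C^d; a vector is a function
  nat => complex of which only the entries with index < d matter; an operator on C^d
  is a function nat => nat => complex of which only entries with indices < d matter.
  The tensor product C^dA (x) C^dB is identified with C^(dA*dB), the basis vector
  e_i (x) f_j corresponding to the index i*dB + j.\<close>

definition unit_vector :: "nat \<Rightarrow> (nat \<Rightarrow> complex) \<Rightarrow> bool" where
  "unit_vector d \<psi> \<longleftrightarrow> (\<Sum>j<d. (cmod (\<psi> j))\<^sup>2) = 1"

definition density_op :: "nat \<Rightarrow> (nat \<Rightarrow> nat \<Rightarrow> complex) \<Rightarrow> bool" where
  "density_op d \<rho> \<longleftrightarrow>
     (\<forall>v :: nat \<Rightarrow> complex.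
        let q = (\<Sum>a<d. \<Sum>b<d. cnj (v a) * \<rho> a b * v b) in Im q = 0 \<and> Re q \<ge> 0)
   \<and> (\<Sum>a<d. \<rho> a a) = 1"

definition pure_decomp ::
  "nat \<Rightarrow> (nat \<Rightarrow> nat \<Rightarrow> complex) \<Rightarrow> nat \<Rightarrow> (nat \<Rightarrow> real) \<Rightarrow> (nat \<Rightarrow> nat \<Rightarrow> complex) \<Rightarrow> bool"
  where
  "pure_decomp d \<rho> n p \<psi> \<longleftrightarrow>
     (\<forall>i<n. p i > 0 \<and> unit_vector d (\<psi> i))
   \<and> (\<Sum>i<n. p i) = 1
   \<and> (\<forall>a<d. \<forall>b<d. \<rho> a b = (\<Sum>i<n. complex_of_real (p i) * \<psi> i a * cnj (\<psi> i b)))"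

definition NR :: "nat \<Rightarrow> (nat \<Rightarrow> nat \<Rightarrow> complex) \<Rightarrow> nat \<Rightarrow> (nat \<Rightarrow> complex) \<Rightarrow> nat" where
  "NR d \<chi> m \<psi> = (LEAST r. \<exists>S c. S \<subseteq> {..<m} \<and> card S = r \<and> (\<forall>i\<in>S. c i \<noteq> (0::complex))
        \<and> (\<forall>j<d. \<psi> j = (\<Sum>i\<in>S. c i * \<chi> i j)))"

definition NN :: "nat \<Rightarrow> (nat \<Rightarrow> nat \<Rightarrow> complex) \<Rightarrow> nat \<Rightarrow> (nat \<Rightarrow> nat \<Rightarrow> complex) \<Rightarrow> nat" where
  "NN d \<chi> m \<rho> = Inf {Max ((\<lambda>i. NR d \<chi> m (\<psi> i)) ` {..<n}) | n p \<psi>. pure_decomp d \<rho> n p \<psi>}"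

definition SR :: "nat \<Rightarrow> nat \<Rightarrow> (nat \<Rightarrow> complex) \<Rightarrow> nat" where
  "SR dA dB \<psi> = (LEAST r. \<exists>(a :: nat \<Rightarrow> nat \<Rightarrow> complex) (b :: nat \<Rightarrow> nat \<Rightarrow> complex).
        \<forall>j<dA * dB. \<psi> j = (\<Sum>k<r. a k (j div dB) * b k (j mod dB)))"

definition SN :: "nat \<Rightarrow> nat \<Rightarrow> (nat \<Rightarrow> nat \<Rightarrow> complex) \<Rightarrow> nat" where
  "SN dA dB \<rho> = Inf {Max ((\<lambda>i. SR dA dB (\<psi> i)) ` {..<n}) | n p \<psi>. pure_decomp (dA * dB) \<rho> n p \<psi>}"

definition isometry :: "nat \<Rightarrow> nat \<Rightarrow> (nat \<Rightarrow> nat \<Rightarrow> complex) \<Rightarrow> bool" where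
  "isometry d dout \<Gamma> \<longleftrightarrow>
     (\<forall>a<d. \<forall>b<d. (\<Sum>k<dout. cnj (\<Gamma> k a) * \<Gamma> k b) = (if a = b then 1 else 0))"

definition conj_by :: "nat \<Rightarrow> (nat \<Rightarrow> nat \<Rightarrow> complex) \<Rightarrow> (nat \<Rightarrow> nat \<Rightarrow> complex) \<Rightarrow> (nat \<Rightarrow> nat \<Rightarrow> complex)" where
  "conj_by d \<Gamma> \<rho> = (\<lambda>x y. \<Sum>a<d. \<Sum>b<d. \<Gamma> x a * \<rho> a b * cnj (\<Gamma> y b))"

end

theory Submission
  imports Defs "HOL-Library.Function_Algebras" "HOL-Analysis.Convex"
begin

text \<open>Expand \<open>\<psi> = \<Sum>\<^sub>i c\<^sub>i(\<psi>) \<chi>\<^sub>i\<close> in the basis of classical states and put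
  \<open>\<Gamma> \<psi> = \<Sum>\<^sub>i c\<^sub>i(\<psi>) u\<^sub>i \<otimes> v\<^sub>i\<close> for linearly independent families \<open>u\<close> and \<open>v\<close>. The Schmidt rank of
  \<open>\<Gamma> \<psi>\<close> is then the number of nonzero \<open>c\<^sub>i(\<psi>)\<close>, which is the nonclassical rank of \<open>\<psi>\<close>.
  \<open>\<Gamma>\<close> is an isometry as soon as the entrywise product of the Gram matrices of \<open>u\<close> and \<open>v\<close> is the
  Gram matrix \<open>G\<close> of the \<open>\<chi>\<^sub>i\<close>; this is achieved by \<open>v\<^sub>i = e\<^sub>i + K (1, \<dots>, 1)\<close> together with a
  Cholesky factor \<open>u\<close> of \<open>(G - \<epsilon> I) / \<sigma>\<close>, which is positive definite because \<open>G \<ge> I / K\<close>.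
  Finally, for an isometry the pure-state decompositions of \<open>\<rho>\<close> and of \<open>\<Gamma> \<rho> \<Gamma>\<^sup>\<dagger>\<close> correspond
  to each other via \<open>\<psi>\<^sub>i \<mapsto> \<Gamma> \<psi>\<^sub>i\<close>, so \<open>NN(\<rho>) = SN(\<Gamma> \<rho> \<Gamma>\<^sup>\<dagger>)\<close>.\<close>

definition cinner :: "nat \<Rightarrow> (nat \<Rightarrow> complex) \<Rightarrow> (nat \<Rightarrow> complex) \<Rightarrow> complex" where
  "cinner n f g = (\<Sum>k<n. cnj (f k) * g k)"

definition sesq :: "nat \<Rightarrow> (nat \<Rightarrow> nat \<Rightarrow> complex) \<Rightarrow> (nat \<Rightarrow> complex) \<Rightarrow> (nat \<Rightarrow> complex) \<Rightarrow> complex" where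
  "sesq n A f g = (\<Sum>i<n. \<Sum>j<n. cnj (f i) * A i j * g j)"

definition mat_vec :: "nat \<Rightarrow> (nat \<Rightarrow> nat \<Rightarrow> complex) \<Rightarrow> (nat \<Rightarrow> complex) \<Rightarrow> nat \<Rightarrow> complex" where
  "mat_vec n G x = (\<lambda>k. \<Sum>a<n. G k a * x a)"

definition adj_vec :: "nat \<Rightarrow> (nat \<Rightarrow> nat \<Rightarrow> complex) \<Rightarrow> (nat \<Rightarrow> complex) \<Rightarrow> nat \<Rightarrow> complex" where
  "adj_vec m G y = (\<lambda>a. \<Sum>k<m. cnj (G k a) * y k)"

definition gram :: "nat \<Rightarrow> (nat \<Rightarrow> nat \<Rightarrow> complex) \<Rightarrow> nat \<Rightarrow> nat \<Rightarrow> complex" where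
  "gram m u i j = cinner m (u i) (u j)"

definition lin_independent :: "nat \<Rightarrow> nat \<Rightarrow> (nat \<Rightarrow> nat \<Rightarrow> complex) \<Rightarrow> bool" where
  "lin_independent n m u \<longleftrightarrow> (\<forall>c. (\<forall>x<m. (\<Sum>i<n. c i * u i x) = 0) \<longrightarrow> (\<forall>i<n. c i = 0))"

definition has_dual_family :: "nat \<Rightarrow> nat \<Rightarrow> (nat \<Rightarrow> nat \<Rightarrow> complex) \<Rightarrow> bool" where
  "has_dual_family n m v \<longleftrightarrow> (\<forall>i<n. \<exists>w. \<forall>i'<n. (\<Sum>y<m. v i' y * w y) = (if i' = i then 1 else 0))"

lemma cinner_cong:
  "(\<And>k. k < n \<Longrightarrow> f k = f' k) \<Longrightarrow> (\<And>k. k < n \<Longrightarrow> g k = g' k) \<Longrightarrow> cinner n f g = cinner n f' g'"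
  unfolding cinner_def by simp

lemma cinner_commute: "cinner n g f = cnj (cinner n f g)"
  unfolding cinner_def by (simp add: mult.commute)

lemma cinner_diff_left: "cinner n (\<lambda>k. f k - g k) h = cinner n f h - cinner n g h"
  unfolding cinner_def by (simp add: algebra_simps sum_subtractf)

lemma cinner_self: "cinner n f f = complex_of_real (\<Sum>k<n. (cmod (f k))\<^sup>2)"
proof -
  have "\<And>k. cnj (f k) * f k = complex_of_real ((cmod (f k))\<^sup>2)"
    by (simp only: complex_norm_square mult.commute)
  then show ?thesis unfolding cinner_def of_real_sum by (simp del: of_real_power)
qed

lemma cinner_self_eq_0D: "cinner n f f = 0 \<Longrightarrow> k < n \<Longrightarrow> f k = 0"
  unfolding cinner_self of_real_eq_0_iff by (subst (asm) sum_nonneg_eq_0_iff) auto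

lemma unit_vector_iff_cinner: "unit_vector n f \<longleftrightarrow> cinner n f f = 1"
  unfolding unit_vector_def cinner_self by (metis of_real_1 of_real_eq_iff)

lemma cinner_mat_vec_left: "cinner m (mat_vec n G x) y = cinner n x (adj_vec m G y)"
  unfolding cinner_def mat_vec_def adj_vec_def
  by (simp add: sum_distrib_left sum_distrib_right sum.swap[of _ "{..<m}"] mult_ac)

lemma cinner_combination:
  "cinner m (\<lambda>x. \<Sum>i<n. \<alpha> i * f i x) (\<lambda>x. \<Sum>j<n. \<beta> j * f j x)
     = (\<Sum>i<n. \<Sum>j<n. cnj (\<alpha> i) * \<beta> j * gram m f i j)"
  unfolding cinner_def gram_def
  by (simp add: sum_distrib_left sum_distrib_right sum.swap[of _ "{..<m}"] mult_ac)

lemma sesq_eq_cinner_combination: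
  "sesq n (gram m f) c c' = cinner m (\<lambda>x. \<Sum>i<n. c i * f i x) (\<lambda>x. \<Sum>j<n. c' j * f j x)"
  unfolding cinner_combination sesq_def by (simp add: mult_ac)

lemma adj_vec_mat_vec:
  assumes "isometry n m G" "a < n"
  shows "adj_vec m G (mat_vec n G x) a = x a"
proof -
  have "adj_vec m G (mat_vec n G x) a = (\<Sum>b<n. (\<Sum>k<m. cnj (G k a) * G k b) * x b)"
    unfolding adj_vec_def mat_vec_def
    by (simp add: sum_distrib_left sum_distrib_right sum.swap[of _ "{..<m}"] mult_ac)
  also have "\<dots> = (\<Sum>b<n. if a = b then x b else 0)"
    using assms unfolding isometry_def by (intro sum.cong) auto
  finally show ?thesis using assms(2) by simp
qed

lemma isometry_cinner:
  assumes "isometry n m G"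
  shows "cinner m (mat_vec n G x) (mat_vec n G y) = cinner n x y"
  unfolding cinner_mat_vec_left using adj_vec_mat_vec[OF assms] by (intro cinner_cong) auto

lemma sesq_conj_by: "sesq m (conj_by d G \<rho>) f g = sesq d \<rho> (adj_vec m G f) (adj_vec m G g)"
proof -
  have "sesq m (conj_by d G \<rho>) f g
      = (\<Sum>x<m. \<Sum>y<m. \<Sum>a<d. \<Sum>b<d. (cnj (f x) * G x a) * \<rho> a b * (cnj (G y b) * g y))"
    unfolding sesq_def conj_by_def by (simp add: sum_distrib_left sum_distrib_right mult_ac)
  also have "\<dots> = (\<Sum>a<d. \<Sum>b<d. \<Sum>x<m. \<Sum>y<m. (cnj (f x) * G x a) * \<rho> a b * (cnj (G y b) * g y))"
    by (simp only: sum.swap[of _ "{..<m}" "{..<d}"])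
  also have "\<dots> = sesq d \<rho> (adj_vec m G f) (adj_vec m G g)"
    unfolding sesq_def adj_vec_def by (simp add: sum_distrib_left sum_distrib_right mult_ac)
  finally show ?thesis .
qed

lemma sesq_cong:
  "(\<And>k. k < n \<Longrightarrow> f k = f' k) \<Longrightarrow> (\<And>k. k < n \<Longrightarrow> g k = g' k) \<Longrightarrow> sesq n A f g = sesq n A f' g'"
  unfolding sesq_def by simp

lemma sesq_indicator:
  assumes "a < n" "b < n"
  shows "sesq n A (\<lambda>i. if i = a then 1 else 0) (\<lambda>j. if j = b then 1 else 0) = A a b"
  using assms by (simp add: sesq_def if_distrib if_distribR sum.If_cases)

lemma cinner_indicator_left: "a < n \<Longrightarrow> cinner n (\<lambda>i. if i = a then 1 else 0) f = f a"
  by (simp add: cinner_def if_distrib[of cnj] if_distrib[of "\<lambda>x. x * _"] cong: if_cong)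

lemma sesq_pure_decomp:
  assumes "pure_decomp m C n p \<phi>"
  shows "sesq m C f g = (\<Sum>i<n. of_real (p i) * cnj (cinner m (\<phi> i) f) * cinner m (\<phi> i) g)"
proof -
  have "sesq m C f g = (\<Sum>x<m. \<Sum>y<m. \<Sum>i<n. of_real (p i) * (\<phi> i x * cnj (f x)) * (cnj (\<phi> i y) * g y))"
    using assms unfolding sesq_def pure_decomp_def
    by (intro sum.cong refl) (simp add: sum_distrib_left sum_distrib_right mult_ac)
  also have "\<dots> = (\<Sum>i<n. \<Sum>x<m. \<Sum>y<m. of_real (p i) * (\<phi> i x * cnj (f x)) * (cnj (\<phi> i y) * g y))"
    by (simp only: sum.swap[of _ "{..<m}" "{..<n}"])
  also have "\<dots> = (\<Sum>i<n. of_real (p i) * cnj (cinner m (\<phi> i) f) * cinner m (\<phi> i) g)"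
    unfolding cinner_def by (simp add: sum_distrib_left sum_distrib_right mult_ac)
  finally show ?thesis .
qed

lemma pure_decomp_mat_vec:
  assumes iso: "isometry d m G" and decomp: "pure_decomp d \<rho> n p \<psi>"
  shows "pure_decomp m (conj_by d G \<rho>) n p (\<lambda>i. mat_vec d G (\<psi> i))"
proof -
  have entry: "conj_by d G \<rho> x y
      = (\<Sum>i<n. of_real (p i) * mat_vec d G (\<psi> i) x * cnj (mat_vec d G (\<psi> i) y))" for x y
  proof -
    have "conj_by d G \<rho> x y
        = (\<Sum>a<d. \<Sum>b<d. \<Sum>i<n. of_real (p i) * (G x a * \<psi> i a) * cnj (G y b * \<psi> i b))"
      using decomp unfolding conj_by_def pure_decomp_def
      by (intro sum.cong refl) (simp add: sum_distrib_left sum_distrib_right mult_ac)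
    also have "\<dots> = (\<Sum>i<n. \<Sum>a<d. \<Sum>b<d. of_real (p i) * (G x a * \<psi> i a) * cnj (G y b * \<psi> i b))"
      by (simp only: sum.swap[of _ "{..<d}" "{..<n}"])
    also have "\<dots> = (\<Sum>i<n. of_real (p i) * mat_vec d G (\<psi> i) x * cnj (mat_vec d G (\<psi> i) y))"
      unfolding mat_vec_def by (simp add: sum_distrib_left sum_distrib_right mult_ac)
    finally show ?thesis .
  qed
  show ?thesis
    using decomp entry unfolding pure_decomp_def unit_vector_iff_cinner isometry_cinner[OF iso]
    by auto
qed

text \<open>The vectors of a decomposition of \<open>\<Gamma> \<rho> \<Gamma>\<^sup>\<dagger>\<close> lie in the range of \<open>\<Gamma>\<close>: the component
  \<open>w\<close> of \<open>\<phi>\<^sub>i\<close> orthogonal to that range has \<open>\<langle>w, \<Gamma> \<rho> \<Gamma>\<^sup>\<dagger> w\<rangle> = 0\<close>, which forces \<open>\<langle>\<phi>\<^sub>i, w\<rangle> = 0\<close>.\<close>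
lemma pure_decomp_in_range:
  assumes iso: "isometry d m G" and decomp: "pure_decomp m (conj_by d G \<rho>) n p \<phi>"
    and "i < n" "k < m"
  shows "\<phi> i k = mat_vec d G (adj_vec m G (\<phi> i)) k"
proof -
  define w where "w = (\<lambda>k. \<phi> i k - mat_vec d G (adj_vec m G (\<phi> i)) k)"
  have adj_w: "adj_vec m G w a = 0" if "a < d" for a
  proof -
    have "adj_vec m G w a = adj_vec m G (\<phi> i) a - adj_vec m G (mat_vec d G (adj_vec m G (\<phi> i))) a"
      unfolding w_def adj_vec_def by (simp add: algebra_simps sum_subtractf)
    then show ?thesis using adj_vec_mat_vec[OF iso that] by simp
  qed
  have "sesq m (conj_by d G \<rho>) w w = 0"
    unfolding sesq_conj_by using adj_w by (simp add: sesq_def)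
  then have "(\<Sum>l<n. of_real (p l * (cmod (cinner m (\<phi> l) w))\<^sup>2)) = (0 :: complex)"
    unfolding sesq_pure_decomp[OF decomp] of_real_mult complex_norm_square by (simp add: mult_ac)
  then have "(\<Sum>l<n. p l * (cmod (cinner m (\<phi> l) w))\<^sup>2) = 0"
    by (simp only: of_real_sum[symmetric] of_real_eq_0_iff)
  then have "p i * (cmod (cinner m (\<phi> i) w))\<^sup>2 = 0"
    using decomp \<open>i < n\<close> unfolding pure_decomp_def by (subst (asm) sum_nonneg_eq_0_iff) auto
  then have orth: "cinner m (\<phi> i) w = 0"
    using decomp \<open>i < n\<close> unfolding pure_decomp_def by auto
  have "cinner m w w = cinner m (\<phi> i) w - cinner d (adj_vec m G (\<phi> i)) (adj_vec m G w)"
    unfolding w_def cinner_diff_left cinner_mat_vec_left ..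
  also have "\<dots> = 0"
    using orth adj_w by (simp add: cinner_def)
  finally show ?thesis
    using cinner_self_eq_0D \<open>k < m\<close> unfolding w_def by fastforce
qed

lemma pure_decomp_adj_vec:
  assumes iso: "isometry d m G" and decomp: "pure_decomp m (conj_by d G \<rho>) n p \<phi>"
  shows "pure_decomp d \<rho> n p (\<lambda>i. adj_vec m G (\<phi> i))"
proof -
  let ?e = "\<lambda>a i. if i = a then 1 else (0 :: complex)"
  have entry: "\<rho> a b = (\<Sum>i<n. of_real (p i) * adj_vec m G (\<phi> i) a * cnj (adj_vec m G (\<phi> i) b))"
    if "a < d" "b < d" for a b
  proof -
    have "\<rho> a b = sesq d \<rho> (adj_vec m G (mat_vec d G (?e a))) (adj_vec m G (mat_vec d G (?e b)))"
      using that adj_vec_mat_vec[OF iso] by (subst sesq_indicator[symmetric]) (auto intro: sesq_cong)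
    also have "\<dots> = (\<Sum>i<n. of_real (p i) * cnj (cinner m (\<phi> i) (mat_vec d G (?e a)))
                                       * cinner m (\<phi> i) (mat_vec d G (?e b)))"
      unfolding sesq_conj_by[symmetric] sesq_pure_decomp[OF decomp] ..
    also have "\<dots> = (\<Sum>i<n. of_real (p i) * adj_vec m G (\<phi> i) a * cnj (adj_vec m G (\<phi> i) b))"
      using that by (simp add: cinner_commute[of m "\<phi> _"] cinner_mat_vec_left cinner_indicator_left)
    finally show ?thesis .
  qed
  have unit: "unit_vector d (adj_vec m G (\<phi> i))" if "i < n" for i
  proof -
    have "cinner d (adj_vec m G (\<phi> i)) (adj_vec m G (\<phi> i))
        = cinner m (mat_vec d G (adj_vec m G (\<phi> i))) (mat_vec d G (adj_vec m G (\<phi> i)))"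
      using isometry_cinner[OF iso] by simp
    also have "\<dots> = cinner m (\<phi> i) (\<phi> i)"
      using pure_decomp_in_range[OF iso decomp that] by (intro cinner_cong) auto
    finally show ?thesis
      using decomp that unfolding pure_decomp_def unit_vector_iff_cinner by auto
  qed
  show ?thesis
    using decomp entry unit unfolding pure_decomp_def by auto
qed

lemma SR_cong: "(\<And>j. j < dA * dB \<Longrightarrow> f j = g j) \<Longrightarrow> SR dA dB f = SR dA dB g"
  unfolding SR_def by simp

lemma NN_eq_SN_conj_by:
  assumes iso: "isometry d (dA * dB) G"
    and rank: "\<And>\<psi>. SR dA dB (mat_vec d G \<psi>) = NR d \<chi> m \<psi>"
  shows "NN d \<chi> m \<rho> = SN dA dB (conj_by d G \<rho>)"
proof -
  let ?C = "conj_by d G \<rho>"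
  have "{Max ((\<lambda>i. NR d \<chi> m (\<psi> i)) ` {..<n}) | n p \<psi>. pure_decomp d \<rho> n p \<psi>}
      = {Max ((\<lambda>i. SR dA dB (\<phi> i)) ` {..<n}) | n p \<phi>. pure_decomp (dA * dB) ?C n p \<phi>}"
  proof (intro set_eqI iffI; elim CollectE exE conjE)
    fix z n p \<psi>
    assume z: "z = Max ((\<lambda>i. NR d \<chi> m (\<psi> i)) ` {..<n})" and decomp: "pure_decomp d \<rho> n p \<psi>"
    have "z = Max ((\<lambda>i. SR dA dB (mat_vec d G (\<psi> i))) ` {..<n})"
      unfolding z rank ..
    with pure_decomp_mat_vec[OF iso decomp]
    show "z \<in> {Max ((\<lambda>i. SR dA dB (\<phi> i)) ` {..<n}) | n p \<phi>. pure_decomp (dA * dB) ?C n p \<phi>}"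
      by (auto intro!: exI[of _ "\<lambda>i. mat_vec d G (\<psi> i)"])
  next
    fix z n p \<phi>
    assume z: "z = Max ((\<lambda>i. SR dA dB (\<phi> i)) ` {..<n})" and decomp: "pure_decomp (dA * dB) ?C n p \<phi>"
    have "SR dA dB (\<phi> i) = NR d \<chi> m (adj_vec (dA * dB) G (\<phi> i))" if "i < n" for i
      unfolding rank[symmetric] using pure_decomp_in_range[OF iso decomp that] by (rule SR_cong)
    then have "z = Max ((\<lambda>i. NR d \<chi> m (adj_vec (dA * dB) G (\<phi> i))) ` {..<n})"
      unfolding z by (intro arg_cong[where f = Max] image_cong) auto
    with pure_decomp_adj_vec[OF iso decomp]
    show "z \<in> {Max ((\<lambda>i. NR d \<chi> m (\<psi> i)) ` {..<n}) | n p \<psi>. pure_decomp d \<rho> n p \<psi>}"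
      by (auto intro!: exI[of _ "\<lambda>i. adj_vec (dA * dB) G (\<phi> i)"])
  qed
  then show ?thesis
    unfolding NN_def SN_def by simp
qed

lemma NR_eq_card_support:
  assumes indep: "lin_independent m d \<chi>"
    and \<psi>: "\<forall>j<d. \<psi> j = (\<Sum>i<m. c i * \<chi> i j)"
  shows "NR d \<chi> m \<psi> = card {i. i < m \<and> c i \<noteq> 0}"
  unfolding NR_def
proof (rule Least_equality)
  let ?S = "{i. i < m \<and> c i \<noteq> 0}"
  show "\<exists>S c'. S \<subseteq> {..<m} \<and> card S = card ?S \<and> (\<forall>i\<in>S. c' i \<noteq> 0)
      \<and> (\<forall>j<d. \<psi> j = (\<Sum>i\<in>S. c' i * \<chi> i j))"
  proof (intro exI conjI)
    show "\<forall>j<d. \<psi> j = (\<Sum>i\<in>?S. c i * \<chi> i j)"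
      using \<psi> by (auto intro: sum.mono_neutral_right)
  qed auto
next
  fix r
  assume "\<exists>S c'. S \<subseteq> {..<m} \<and> card S = r \<and> (\<forall>i\<in>S. c' i \<noteq> 0)
      \<and> (\<forall>j<d. \<psi> j = (\<Sum>i\<in>S. c' i * \<chi> i j))"
  then obtain S c' where S: "S \<subseteq> {..<m}" "card S = r" "\<forall>i\<in>S. c' i \<noteq> 0"
    and \<psi>': "\<forall>j<d. \<psi> j = (\<Sum>i\<in>S. c' i * \<chi> i j)"
    by blast
  define e where "e i = c i - (if i \<in> S then c' i else 0)" for i
  have "(\<Sum>i<m. e i * \<chi> i j) = 0" if "j < d" for j
  proof -
    have "(\<Sum>i<m. (if i \<in> S then c' i else 0) * \<chi> i j) = (\<Sum>i\<in>S. c' i * \<chi> i j)"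
      using S(1) by (intro sum.mono_neutral_cong_right) auto
    then show ?thesis
      using \<psi> \<psi>' that unfolding e_def by (simp add: left_diff_distrib sum_subtractf)
  qed
  then have "\<forall>i<m. e i = 0"
    using indep unfolding lin_independent_def by blast
  then have "{i. i < m \<and> c i \<noteq> 0} = S"
    using S(1,3) unfolding e_def by (auto split: if_splits)
  then show "card {i. i < m \<and> c i \<noteq> 0} \<le> r"
    using S(2) by simp
qed

interpretation cvec: vector_space "\<lambda>(c :: complex) (f :: nat \<Rightarrow> complex) x. c * f x"
  by unfold_locales (auto simp: fun_eq_iff algebra_simps)

lemma sum_fun_apply: "(\<Sum>i\<in>S. (f i :: nat \<Rightarrow> complex)) x = (\<Sum>i\<in>S. f i x)"
  by (induction S rule: infinite_finite_induct) auto

text \<open>Families are compared only on indices below the dimension, whereas the vector space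
  compares whole functions; truncation reconciles the two.\<close>
definition truncate :: "nat \<Rightarrow> (nat \<Rightarrow> complex) \<Rightarrow> nat \<Rightarrow> complex" where
  "truncate m f x = (if x < m then f x else 0)"

lemma lin_independent_truncate:
  assumes indep: "lin_independent n m u"
  shows "inj_on (\<lambda>i. truncate m (u i)) {..<n}"
    and "cvec.independent ((\<lambda>i. truncate m (u i)) ` {..<n})"
proof -
  let ?U = "\<lambda>i. truncate m (u i)"
  have combination: "\<forall>i<n. e i = 0" if "\<And>x. x < m \<Longrightarrow> (\<Sum>i<n. e i * u i x) = 0" for e
    using indep that unfolding lin_independent_def by blast
  show inj: "inj_on ?U {..<n}"
  proof
    fix i i' assume i: "i \<in> {..<n}" "i' \<in> {..<n}" and eq: "?U i = ?U i'"
    define e where "e k = (if k = i then 1 else 0) - (if k = i' then 1 else (0 :: complex))" for k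
    have "(\<Sum>k<n. e k * u k x) = 0" if "x < m" for x
      using fun_cong[OF eq, of x] i that unfolding e_def truncate_def
      by (simp add: left_diff_distrib sum_subtractf if_distrib[of "\<lambda>x. x * _"] cong: if_cong)
    then show "i = i'"
      using combination[of e] i unfolding e_def by (auto split: if_splits)
  qed
  show "cvec.independent (?U ` {..<n})"
  proof (rule cvec.independent_if_scalars_zero)
    fix g z
    assume g: "(\<Sum>y\<in>?U ` {..<n}. (\<lambda>x. g y * y x)) = 0" and z: "z \<in> ?U ` {..<n}"
    have "(\<Sum>i<n. g (?U i) * u i x) = 0" if "x < m" for x
      using fun_cong[OF g, of x] that
      unfolding sum_fun_apply sum.reindex[OF inj] by (simp add: truncate_def)
    then show "g z = 0"
      using combination[of "\<lambda>i. g (?U i)"] z by auto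
  qed simp
qed

text \<open>Pairing with a vector dual to the \<open>v\<^sub>i\<close> isolates the summand \<open>c\<^sub>i\<^sub>0 u\<^sub>i\<^sub>0\<close> of a
  tensor on the left factor.\<close>
lemma left_factor_in_span:
  fixes n :: nat
  assumes dual: "\<forall>i'<n. (\<Sum>y<dB. v i' y * w y) = (if i' = i0 then 1 else 0)"
    and "i0 < n" "c i0 \<noteq> 0"
    and eq: "\<And>x y. x < dA \<Longrightarrow> y < dB \<Longrightarrow> (\<Sum>i<n. c i * u i x * v i y) = (\<Sum>k<r. a k x * b k y)"
  shows "truncate dA (u i0) \<in> cvec.span ((\<lambda>k. truncate dA (a k)) ` {..<r})"
proof -
  define \<beta> where "\<beta> k = (\<Sum>y<dB. b k y * w y) / c i0" for k
  have "(\<Sum>k<r. a k x * (\<Sum>y<dB. b k y * w y)) = c i0 * u i0 x" if "x < dA" for x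
  proof -
    have "(\<Sum>k<r. a k x * (\<Sum>y<dB. b k y * w y)) = (\<Sum>y<dB. (\<Sum>k<r. a k x * b k y) * w y)"
      by (simp add: sum_distrib_left sum_distrib_right sum.swap[of _ "{..<r}"] mult_ac)
    also have "\<dots> = (\<Sum>y<dB. (\<Sum>i<n. c i * u i x * v i y) * w y)"
      using eq[OF that] by simp
    also have "\<dots> = (\<Sum>i<n. c i * u i x * (\<Sum>y<dB. v i y * w y))"
      by (simp add: sum_distrib_left sum_distrib_right sum.swap[of _ "{..<dB}"] mult_ac)
    also have "\<dots> = (\<Sum>i<n. if i = i0 then c i * u i x else 0)"
      using dual by (intro sum.cong) auto
    also have "\<dots> = c i0 * u i0 x"
      using \<open>i0 < n\<close> by simp
    finally show ?thesis .
  qed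
  then have "truncate dA (u i0) = (\<Sum>k<r. (\<lambda>x. \<beta> k * truncate dA (a k) x))"
    using \<open>c i0 \<noteq> 0\<close> unfolding \<beta>_def truncate_def
    by (auto simp: fun_eq_iff sum_fun_apply sum_divide_distrib[symmetric] mult_ac)
  also have "\<dots> \<in> cvec.span ((\<lambda>k. truncate dA (a k)) ` {..<r})"
    by (intro cvec.span_sum cvec.span_scale cvec.span_base) auto
  finally show ?thesis .
qed

lemma tensor_index:
  fixes x y :: nat
  assumes "x < dA" "y < dB"
  shows "x * dB + y < dA * dB" "(x * dB + y) div dB = x" "(x * dB + y) mod dB = y"
proof -
  have "x * dB + y < (x + 1) * dB" using assms(2) by simp
  also have "\<dots> \<le> dA * dB" using assms(1) by (intro mult_right_mono) auto
  finally show "x * dB + y < dA * dB" .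
qed (use assms in auto)

lemma card_support_le_tensor_rank:
  fixes n :: nat
  assumes indep: "lin_independent n dA u" and dual: "has_dual_family n dB v"
    and eq: "\<And>x y. x < dA \<Longrightarrow> y < dB \<Longrightarrow> (\<Sum>i<n. c i * u i x * v i y) = (\<Sum>k<r. a k x * b k y)"
  shows "card {i. i < n \<and> c i \<noteq> 0} \<le> r"
proof -
  let ?S = "{i. i < n \<and> c i \<noteq> 0}" and ?U = "\<lambda>i. truncate dA (u i)"
  have "?U ` ?S \<subseteq> cvec.span ((\<lambda>k. truncate dA (a k)) ` {..<r})"
  proof (intro image_subsetI)
    fix i0 assume "i0 \<in> ?S"
    moreover obtain w where "\<forall>i'<n. (\<Sum>y<dB. v i' y * w y) = (if i' = i0 then 1 else 0)"
      using dual \<open>i0 \<in> ?S\<close> unfolding has_dual_family_def by blast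
    ultimately show "?U i0 \<in> cvec.span ((\<lambda>k. truncate dA (a k)) ` {..<r})"
      using eq by (intro left_factor_in_span) auto
  qed
  moreover have "cvec.independent (?U ` ?S)"
    by (rule cvec.independent_mono[OF lin_independent_truncate(2)[OF indep]]) auto
  ultimately have "card (?U ` ?S) \<le> card ((\<lambda>k. truncate dA (a k)) ` {..<r})"
    by (intro conjunct2[OF cvec.independent_span_bound]) auto
  also have "\<dots> \<le> r"
    using card_image_le[of "{..<r}" "\<lambda>k. truncate dA (a k)"] by simp
  moreover have "inj_on ?U ?S"
    by (rule inj_on_subset[OF lin_independent_truncate(1)[OF indep]]) auto
  ultimately show ?thesis
    by (simp add: card_image)
qed

lemma SR_eq_card_support:
  fixes n :: nat
  assumes indep: "lin_independent n dA u" and dual: "has_dual_family n dB v"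
  shows "SR dA dB (\<lambda>k. \<Sum>i<n. c i * u i (k div dB) * v i (k mod dB)) = card {i. i < n \<and> c i \<noteq> 0}"
  unfolding SR_def
proof (rule Least_equality)
  let ?S = "{i. i < n \<and> c i \<noteq> 0}"
  obtain h where h: "bij_betw h {..<card ?S} ?S"
    using ex_bij_betw_nat_finite[of ?S] by (auto simp: atLeast0LessThan)
  have "(\<Sum>i<n. c i * u i x * v i y) = (\<Sum>k<card ?S. c (h k) * u (h k) x * v (h k) y)" for x y
  proof -
    have "(\<Sum>i<n. c i * u i x * v i y) = (\<Sum>i\<in>?S. c i * u i x * v i y)"
      by (rule sum.mono_neutral_right) auto
    also have "\<dots> = (\<Sum>k<card ?S. c (h k) * u (h k) x * v (h k) y)"
      by (rule sum.reindex_bij_betw[OF h, symmetric])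
    finally show ?thesis .
  qed
  then show "\<exists>a b. \<forall>j<dA * dB. (\<Sum>i<n. c i * u i (j div dB) * v i (j mod dB))
      = (\<Sum>k<card ?S. a k (j div dB) * b k (j mod dB))"
    by (intro exI[of _ "\<lambda>k x. c (h k) * u (h k) x"] exI[of _ "\<lambda>k. v (h k)"]) simp
next
  fix r :: nat
  assume "\<exists>a b. \<forall>j<dA * dB. (\<Sum>i<n. c i * u i (j div dB) * v i (j mod dB))
      = (\<Sum>k<r. a k (j div dB) * b k (j mod dB))"
  then obtain a b :: "nat \<Rightarrow> nat \<Rightarrow> complex" where ab: "\<forall>j<dA * dB.
      (\<Sum>i<n. c i * u i (j div dB) * v i (j mod dB)) = (\<Sum>k<r. a k (j div dB) * b k (j mod dB))"
    by blast
  show "card {i. i < n \<and> c i \<noteq> 0} \<le> r"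
  proof (rule card_support_le_tensor_rank[OF indep dual])
    fix x y assume xy: "x < dA" "y < dB"
    show "(\<Sum>i<n. c i * u i x * v i y) = (\<Sum>k<r. a k x * b k y)"
      using ab[rule_format, OF tensor_index(1)[OF xy]] unfolding tensor_index(2,3)[OF xy] .
  qed
qed

definition hermitian :: "nat \<Rightarrow> (nat \<Rightarrow> nat \<Rightarrow> complex) \<Rightarrow> bool" where
  "hermitian n A \<longleftrightarrow> (\<forall>i<n. \<forall>j<n. A j i = cnj (A i j))"

definition positive_definite :: "nat \<Rightarrow> (nat \<Rightarrow> nat \<Rightarrow> complex) \<Rightarrow> bool" where
  "positive_definite n A \<longleftrightarrow> (\<forall>c. (\<exists>i<n. c i \<noteq> 0) \<longrightarrow> Re (sesq n A c c) > 0)"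

lemma positive_definite_cong:
  "(\<And>i j. i < n \<Longrightarrow> j < n \<Longrightarrow> A i j = B i j) \<Longrightarrow> positive_definite n A \<longleftrightarrow> positive_definite n B"
  unfolding positive_definite_def sesq_def by simp

definition schur_complement :: "(nat \<Rightarrow> nat \<Rightarrow> complex) \<Rightarrow> nat \<Rightarrow> nat \<Rightarrow> complex" where
  "schur_complement A i j = A (Suc i) (Suc j) - A (Suc i) 0 * A 0 (Suc j) / A 0 0"

lemma hermitian_diag_real: "hermitian n A \<Longrightarrow> i < n \<Longrightarrow> A i i \<in> \<real>"
  unfolding hermitian_def by (metis Reals_cnj_iff)

lemma hermitian_schur_complement:
  assumes "hermitian (Suc n) A"
  shows "hermitian n (schur_complement A)"
  unfolding hermitian_def
proof (intro allI impI)
  fix i j assume "i < n" "j < n"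
  then have "A (Suc j) (Suc i) = cnj (A (Suc i) (Suc j))" "A (Suc j) 0 = cnj (A 0 (Suc j))"
    "A 0 (Suc i) = cnj (A (Suc i) 0)" "cnj (A 0 0) = A 0 0"
    using assms[unfolded hermitian_def, rule_format, of "Suc i" "Suc j"]
      assms[unfolded hermitian_def, rule_format, of 0 "Suc j"]
      assms[unfolded hermitian_def, rule_format, of "Suc i" 0]
      hermitian_diag_real[OF assms, of 0] by (simp_all add: Reals_cnj_iff)
  then show "schur_complement A j i = cnj (schur_complement A i j)"
    unfolding schur_complement_def by (simp add: mult.commute)
qed

lemma sesq_Suc:
  "sesq (Suc n) A c c = cnj (c 0) * A 0 0 * c 0 + cnj (c 0) * (\<Sum>j<n. A 0 (Suc j) * c (Suc j))
     + (\<Sum>i<n. cnj (c (Suc i)) * A (Suc i) 0) * c 0 + sesq n (\<lambda>i j. A (Suc i) (Suc j)) (c \<circ> Suc) (c \<circ> Suc)"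
  unfolding sesq_def sum.lessThan_Suc_shift
  by (simp add: sum.distrib sum_distrib_left sum_distrib_right algebra_simps)

text \<open>Choosing the first coordinate to complete the square turns the quadratic form of \<open>A\<close>
  into that of its Schur complement.\<close>
lemma sesq_schur_complement:
  fixes c :: "nat \<Rightarrow> complex"
  assumes herm: "hermitian (Suc n) A" and nz: "A 0 0 \<noteq> 0"
  defines "c0 \<equiv> - (\<Sum>j<n. A 0 (Suc j) * c j) / A 0 0"
  shows "sesq (Suc n) A (case_nat c0 c) (case_nat c0 c) = sesq n (schur_complement A) c c"
proof -
  let ?s = "\<Sum>j<n. A 0 (Suc j) * c j"
  have real: "cnj (A 0 0) = A 0 0"
    using hermitian_diag_real[OF herm, of 0] by (simp add: Reals_cnj_iff)
  have "A (Suc i) 0 = cnj (A 0 (Suc i))" if "i < n" for i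
    using herm[unfolded hermitian_def, rule_format, of 0 "Suc i"] that by simp
  then have s: "(\<Sum>i<n. cnj (c i) * A (Suc i) 0) = cnj ?s"
    by (simp add: mult.commute)
  have "sesq n (schur_complement A) c c = sesq n (\<lambda>i j. A (Suc i) (Suc j)) c c
      - (\<Sum>i<n. cnj (c i) * A (Suc i) 0) * ?s / A 0 0"
    unfolding sesq_def schur_complement_def
    by (simp add: sum_subtractf sum_distrib_left sum_distrib_right sum_divide_distrib algebra_simps)
  also have "\<dots> = cnj c0 * A 0 0 * c0 + cnj c0 * ?s + cnj ?s * c0 + sesq n (\<lambda>i j. A (Suc i) (Suc j)) c c"
    unfolding s c0_def using nz real by (simp add: field_simps)
  also have "\<dots> = sesq (Suc n) A (case_nat c0 c) (case_nat c0 c)"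
    unfolding sesq_Suc by (simp only: o_def nat.case s)
  finally show ?thesis ..
qed

lemma positive_definite_diag_pos:
  assumes "positive_definite n A" "i < n"
  shows "Re (A i i) > 0"
proof -
  have "Re (sesq n A (\<lambda>j. if j = i then 1 else 0) (\<lambda>j. if j = i then 1 else 0)) > 0"
    using assms(2) by (intro assms(1)[unfolded positive_definite_def, rule_format]) auto
  then show ?thesis
    unfolding sesq_indicator[OF assms(2,2)] .
qed

lemma positive_definite_schur_complement:
  assumes herm: "hermitian (Suc n) A" and pd: "positive_definite (Suc n) A"
  shows "positive_definite n (schur_complement A)"
  unfolding positive_definite_def
proof (intro allI impI)
  fix c :: "nat \<Rightarrow> complex" assume "\<exists>i<n. c i \<noteq> 0"
  then have "\<exists>i<Suc n. case_nat (- (\<Sum>j<n. A 0 (Suc j) * c j) / A 0 0) c i \<noteq> 0"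
    by auto
  then have "Re (sesq (Suc n) A (case_nat (- (\<Sum>j<n. A 0 (Suc j) * c j) / A 0 0) c)
      (case_nat (- (\<Sum>j<n. A 0 (Suc j) * c j) / A 0 0) c)) > 0"
    using pd unfolding positive_definite_def by blast
  moreover have "A 0 0 \<noteq> 0"
    using positive_definite_diag_pos[OF pd, of 0] by auto
  ultimately show "Re (sesq n (schur_complement A) c c) > 0"
    using sesq_schur_complement[OF herm] by simp
qed

lemma gram_Suc: "gram (Suc n) u i j = cnj (u i 0) * u j 0 + gram n (\<lambda>i k. u i (Suc k)) i j"
  unfolding gram_def cinner_def sum.lessThan_Suc_shift ..

text \<open>Cholesky factorisation, by induction on the size: the first row is \<open>(\<surd>a\<^sub>0\<^sub>0, 0, \<dots>)\<close>, the
  others start with \<open>a\<^sub>0\<^sub>i / \<surd>a\<^sub>0\<^sub>0\<close> and continue with a factorisation of the Schur complement.\<close>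
lemma cholesky:
  assumes "hermitian n A" "positive_definite n A"
  shows "\<exists>u. \<forall>i<n. \<forall>j<n. gram n u i j = A i j"
  using assms
proof (induction n arbitrary: A)
  case 0
  then show ?case by simp
next
  case (Suc n)
  obtain w where w: "\<forall>i<n. \<forall>j<n. gram n w i j = schur_complement A i j"
    using Suc.IH hermitian_schur_complement[OF Suc.prems(1)]
      positive_definite_schur_complement[OF Suc.prems] by blast
  define r where "r = sqrt (Re (A 0 0))"
  have "r > 0"
    using positive_definite_diag_pos[OF Suc.prems(2)] unfolding r_def by simp
  moreover have "complex_of_real r * complex_of_real r = A 0 0"
    using positive_definite_diag_pos[OF Suc.prems(2), of 0] hermitian_diag_real[OF Suc.prems(1), of 0]
    unfolding r_def of_real_mult[symmetric] by (simp add: of_real_Re)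
  moreover have "A (Suc i) 0 = cnj (A 0 (Suc i))" if "i < n" for i
    using Suc.prems(1)[unfolded hermitian_def, rule_format, of 0 "Suc i"] that by simp
  ultimately have "gram (Suc n) (case_nat (case_nat (complex_of_real r) (\<lambda>_. 0))
        (\<lambda>i. case_nat (A 0 (Suc i) / complex_of_real r) (w i))) i j = A i j"
    if "i < Suc n" "j < Suc n" for i j
    using that w unfolding gram_Suc
    by (cases i; cases j) (auto simp: gram_def cinner_def schur_complement_def field_simps)
  then show ?case by blast
qed

definition coordinate_matrix ::
  "nat \<Rightarrow> nat \<Rightarrow> (nat \<Rightarrow> nat \<Rightarrow> complex) \<Rightarrow> (nat \<Rightarrow> nat \<Rightarrow> complex) \<Rightarrow> bool" where
  "coordinate_matrix d n \<chi> M \<longleftrightarrow> (\<forall>a. \<forall>j<d. (\<Sum>i<n. M i a * \<chi> i j) = (if j = a then 1 else 0))"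

definition lower_frame_bound :: "nat \<Rightarrow> nat \<Rightarrow> (nat \<Rightarrow> nat \<Rightarrow> complex) \<Rightarrow> real \<Rightarrow> bool" where
  "lower_frame_bound n m \<chi> K \<longleftrightarrow>
     (\<forall>c. (\<Sum>i<n. (cmod (c i))\<^sup>2) \<le> K * (\<Sum>x<m. (cmod (\<Sum>i<n. c i * \<chi> i x))\<^sup>2))"

lemma coordinates_exist:
  assumes "\<forall>\<psi> :: nat \<Rightarrow> complex. \<exists>c. \<forall>j<d. \<psi> j = (\<Sum>i<n. c i * \<chi> i j)"
  shows "\<exists>M. coordinate_matrix d n \<chi> M"
proof -
  have "\<forall>a. \<exists>c. \<forall>j<d. (if j = a then 1 else 0) = (\<Sum>i<n. c i * \<chi> i j)"
    by (intro allI) (rule assms[rule_format])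
  then obtain c where "\<forall>a. \<forall>j<d. (if j = a then 1 else 0) = (\<Sum>i<n. c a i * \<chi> i j)"
    by (metis choice)
  then show ?thesis
    unfolding coordinate_matrix_def by (intro exI[of _ "\<lambda>i a. c a i"]) simp
qed

lemma coordinates_expand:
  assumes coord: "coordinate_matrix d n \<chi> M" and "j < d"
  shows "(\<Sum>i<n. mat_vec d M \<psi> i * \<chi> i j) = \<psi> j"
proof -
  have "(\<Sum>i<n. mat_vec d M \<psi> i * \<chi> i j) = (\<Sum>a<d. \<psi> a * (\<Sum>i<n. M i a * \<chi> i j))"
    unfolding mat_vec_def
    by (simp add: sum_distrib_left sum_distrib_right sum.swap[of _ "{..<n}"] mult_ac)
  also have "\<dots> = \<psi> j"
    using coord \<open>j < d\<close> unfolding coordinate_matrix_def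
    by (simp add: if_distrib[of "\<lambda>x. _ * x"] cong: if_cong)
  finally show ?thesis .
qed

lemma coordinates_unique:
  assumes coord: "coordinate_matrix d n \<chi> M"
    and indep: "lin_independent n d \<chi>" and "i < n"
  shows "mat_vec d M (\<lambda>j. \<Sum>i<n. c i * \<chi> i j) i = c i"
proof -
  let ?\<psi> = "\<lambda>j. \<Sum>i<n. c i * \<chi> i j"
  have "(\<Sum>i<n. (mat_vec d M ?\<psi> i - c i) * \<chi> i j) = 0" if "j < d" for j
    using coordinates_expand[OF coord that, of ?\<psi>] by (simp add: left_diff_distrib sum_subtractf)
  then have "\<forall>i<n. mat_vec d M ?\<psi> i - c i = 0"
    by (intro indep[unfolded lin_independent_def, THEN spec, THEN mp] allI impI)
  then show ?thesis
    using \<open>i < n\<close> by simp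
qed

lemma lower_frame_bound_exists:
  assumes coord: "coordinate_matrix d n \<chi> M"
    and indep: "lin_independent n d \<chi>"
  shows "\<exists>K>0. lower_frame_bound n d \<chi> K"
  unfolding lower_frame_bound_def
proof (intro exI conjI allI)
  define K where "K = 1 + (\<Sum>i<n. \<Sum>a<d. (cmod (M i a))\<^sup>2)"
  show "K > 0"
    unfolding K_def by (simp add: add_pos_nonneg sum_nonneg)
  fix c :: "nat \<Rightarrow> complex"
  define \<psi> where "\<psi> x = (\<Sum>i<n. c i * \<chi> i x)" for x
  have "(cmod (c i))\<^sup>2 \<le> (\<Sum>a<d. (cmod (M i a))\<^sup>2) * (\<Sum>x<d. (cmod (\<psi> x))\<^sup>2)" if "i < n" for i
  proof -
    have "cmod (c i) \<le> (\<Sum>a<d. cmod (M i a) * cmod (\<psi> a))"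
      using coordinates_unique[OF coord indep that, of c] unfolding mat_vec_def \<psi>_def[symmetric]
      by (metis (no_types, lifting) norm_mult norm_sum sum.cong)
    then have "(cmod (c i))\<^sup>2 \<le> (\<Sum>a<d. cmod (M i a) * cmod (\<psi> a))\<^sup>2"
      by (simp add: power_mono)
    also have "\<dots> \<le> (\<Sum>a<d. (cmod (M i a))\<^sup>2) * (\<Sum>x<d. (cmod (\<psi> x))\<^sup>2)"
      by (rule Cauchy_Schwarz_ineq_sum)
    finally show ?thesis .
  qed
  then have "(\<Sum>i<n. (cmod (c i))\<^sup>2) \<le> (\<Sum>i<n. (\<Sum>a<d. (cmod (M i a))\<^sup>2) * (\<Sum>x<d. (cmod (\<psi> x))\<^sup>2))"
    by (intro sum_mono) auto
  also have "\<dots> = (K - 1) * (\<Sum>x<d. (cmod (\<psi> x))\<^sup>2)"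
    unfolding K_def by (simp add: sum_distrib_right)
  also have "\<dots> \<le> K * (\<Sum>x<d. (cmod (\<psi> x))\<^sup>2)"
    by (simp add: mult_right_mono sum_nonneg)
  finally show "(\<Sum>i<n. (cmod (c i))\<^sup>2) \<le> K * (\<Sum>x<d. (cmod (\<Sum>i<n. c i * \<chi> i x))\<^sup>2)"
    unfolding \<psi>_def .
qed

lemma positive_definite_gram_imp_lin_independent:
  assumes "positive_definite n (gram m u)"
  shows "lin_independent n m u"
  unfolding lin_independent_def
proof (rule allI, rule impI)
  fix c :: "nat \<Rightarrow> complex"
  assume "\<forall>x<m. (\<Sum>i<n. c i * u i x) = 0"
  then have "sesq n (gram m u) c c = 0"
    by (simp add: sesq_eq_cinner_combination cinner_def)
  then show "\<forall>i<n. c i = 0"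
    using assms unfolding positive_definite_def by fastforce
qed

lemma positive_definite_shifted_gram:
  assumes frame: "lower_frame_bound n m \<chi> K"
    and "0 \<le> \<epsilon>" "\<epsilon> * K < 1" "\<sigma> > 0"
  shows "positive_definite n (\<lambda>i j. (gram m \<chi> i j - (if i = j then of_real \<epsilon> else 0)) / of_real \<sigma>)"
  unfolding positive_definite_def
proof (intro allI impI)
  fix c :: "nat \<Rightarrow> complex"
  assume "\<exists>i<n. c i \<noteq> 0"
  define N where "N = (\<Sum>i<n. (cmod (c i))\<^sup>2)"
  define Nx where "Nx = (\<Sum>x<m. (cmod (\<Sum>i<n. c i * \<chi> i x))\<^sup>2)"
  have "N > 0"
    unfolding N_def using \<open>\<exists>i<n. c i \<noteq> 0\<close> by (auto intro: sum_pos2)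
  moreover have "N \<le> K * Nx"
    using frame unfolding lower_frame_bound_def N_def Nx_def by blast
  moreover have "Nx \<ge> 0"
    unfolding Nx_def by (simp add: sum_nonneg)
  ultimately have "Nx > 0"
    by (metis less_eq_real_def mult_zero_right not_le)
  have "\<epsilon> * N \<le> \<epsilon> * K * Nx"
    using mult_left_mono[OF \<open>N \<le> K * Nx\<close> \<open>0 \<le> \<epsilon>\<close>] by (simp add: mult.assoc)
  also have "\<dots> < Nx"
    using mult_strict_right_mono[OF \<open>\<epsilon> * K < 1\<close> \<open>Nx > 0\<close>] by simp
  finally have "\<epsilon> * N < Nx" .
  have "sesq n (\<lambda>i j. (gram m \<chi> i j - (if i = j then of_real \<epsilon> else 0)) / of_real \<sigma>) c c
      = (\<Sum>i<n. \<Sum>j<n. cnj (c i) * gram m \<chi> i j * c j / of_real \<sigma>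
          - (if i = j then of_real \<epsilon> * (cnj (c i) * c j) / of_real \<sigma> else 0))"
    unfolding sesq_def by (intro sum.cong refl) (simp add: diff_divide_distrib algebra_simps)
  also have "\<dots> = (sesq n (gram m \<chi>) c c - of_real \<epsilon> * cinner n c c) / of_real \<sigma>"
    unfolding sesq_def cinner_def
    by (simp add: sum_subtractf diff_divide_distrib sum_divide_distrib sum_distrib_left)
  finally have "sesq n (\<lambda>i j. (gram m \<chi> i j - (if i = j then of_real \<epsilon> else 0)) / of_real \<sigma>) c c
      = (sesq n (gram m \<chi>) c c - of_real \<epsilon> * cinner n c c) / of_real \<sigma>" .
  moreover have "sesq n (gram m \<chi>) c c = of_real Nx" "cinner n c c = of_real N"
    unfolding sesq_eq_cinner_combination cinner_self Nx_def N_def by simp_all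
  ultimately show "Re (sesq n (\<lambda>i j. (gram m \<chi> i j - (if i = j then of_real \<epsilon> else 0)) / of_real \<sigma>) c c) > 0"
    using \<open>\<sigma> > 0\<close> \<open>\<epsilon> * N < Nx\<close> by simp
qed

definition ancilla_state :: "real \<Rightarrow> nat \<Rightarrow> nat \<Rightarrow> complex" where
  "ancilla_state s i y = (if y = i then 1 else 0) + of_real s"

lemma gram_ancilla_state:
  assumes "i < n" "j < n"
  shows "gram n (ancilla_state s) i j = (if i = j then 1 else 0) + of_real (2 * s + n * s\<^sup>2)"
  using assms unfolding gram_def cinner_def ancilla_state_def
  by (simp add: algebra_simps sum.distrib if_distrib[of "\<lambda>x. x * _"] if_distrib[of "\<lambda>x. _ * x"]
      if_distrib[of cnj] power2_eq_square cong: if_cong)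

lemma ancilla_state_dual:
  assumes "0 \<le> s"
  shows "has_dual_family n n (ancilla_state s)"
  unfolding has_dual_family_def
proof (intro allI impI exI)
  fix i assume "i < n"
  define \<gamma> where "\<gamma> = s / (1 + n * s)"
  have "1 + n * s > 0"
    using assms(1) by (simp add: add_pos_nonneg)
  then have "\<gamma> * (1 + n * s) = s"
    unfolding \<gamma>_def by simp
  then have "s = \<gamma> + n * (\<gamma> * s)"
    by (simp add: algebra_simps)
  then have "complex_of_real s = of_real (\<gamma> + n * (\<gamma> * s))"
    by (rule arg_cong)
  then have \<gamma>: "complex_of_real s = of_real \<gamma> + of_nat n * (of_real \<gamma> * of_real s)"
    by simp
  fix i' assume "i' < n"
  then show "(\<Sum>y<n. ancilla_state s i' y * ((if y = i then 1 else 0) - of_real \<gamma>))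
      = (if i' = i then 1 else 0)"
    using \<open>i < n\<close> \<gamma> unfolding ancilla_state_def
    by (simp add: algebra_simps sum.distrib sum_subtractf if_distrib[of "\<lambda>x. x * _"]
        if_distrib[of "\<lambda>x. _ * x"] cong: if_cong)
qed

text \<open>\<open>u\<^sub>i\<close> is a Cholesky factor of \<open>(G - \<epsilon> I) / \<sigma>\<close> and \<open>v\<^sub>i = e\<^sub>i + K (1, \<dots>, 1)\<close> has Gram matrix
  \<open>I + \<sigma> J\<close>; with \<open>\<epsilon> = 1 / (1 + \<sigma>)\<close> the Hadamard product is \<open>G\<close>, both off the diagonal and, as
  \<open>G\<close> has unit diagonal, on it. The frame bound makes \<open>\<epsilon>\<close> small enough for positivity.\<close>
lemma gram_hadamard_factorization:
  fixes \<chi> :: "nat \<Rightarrow> nat \<Rightarrow> complex"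
  assumes unit: "\<forall>i<n. unit_vector m (\<chi> i)"
    and frame: "lower_frame_bound n m \<chi> K"
    and "K > 0"
  shows "\<exists>u v. lin_independent n n u
      \<and> has_dual_family n n v
      \<and> (\<forall>i<n. \<forall>j<n. gram n u i j * gram n v i j = gram m \<chi> i j)"
proof -
  define \<sigma> where "\<sigma> = 2 * K + n * K\<^sup>2"
  define \<epsilon> where "\<epsilon> = 1 / (1 + \<sigma>)"
  define A where "A i j = (gram m \<chi> i j - (if i = j then of_real \<epsilon> else 0)) / of_real \<sigma>" for i j
  have "\<sigma> > 0" "K < 1 + \<sigma>"
    unfolding \<sigma>_def using \<open>K > 0\<close> by (simp_all add: add_pos_nonneg)
  then have "\<epsilon> * K < 1" "0 \<le> \<epsilon>"
    unfolding \<epsilon>_def by simp_all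
  then have pd: "positive_definite n A"
    unfolding A_def using frame \<open>\<sigma> > 0\<close> by (intro positive_definite_shifted_gram) auto
  have "A j i = cnj (A i j)" for i j
    unfolding A_def gram_def by (simp add: cinner_commute[of m "\<chi> j"])
  then have "hermitian n A"
    unfolding hermitian_def by blast
  then obtain u where u: "\<forall>i<n. \<forall>j<n. gram n u i j = A i j"
    using cholesky pd by blast
  have "positive_definite n (gram n u)"
    using pd u positive_definite_cong[of n "gram n u" A] by simp
  then have "lin_independent n n u"
    by (rule positive_definite_gram_imp_lin_independent)
  moreover have "has_dual_family n n (ancilla_state K)"
    using \<open>K > 0\<close> by (intro ancilla_state_dual) simp
  moreover have "gram n u i j * gram n (ancilla_state K) i j = gram m \<chi> i j" if "i < n" "j < n" for i j
  proof (cases "i = j")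
    case True
    have "gram m \<chi> i i = 1"
      using unit \<open>i < n\<close> unfolding gram_def unit_vector_iff_cinner by simp
    then have diag: "gram n u i i = of_real ((1 - \<epsilon>) / \<sigma>)"
      using u \<open>i < n\<close> unfolding A_def by simp
    have unit_diag: "(1 - \<epsilon>) / \<sigma> * (1 + \<sigma>) = 1"
      unfolding \<epsilon>_def using \<open>\<sigma> > 0\<close>
      by (simp add: field_simps) (use mult_pos_pos[OF \<open>\<sigma> > 0\<close> \<open>\<sigma> > 0\<close>] in linarith)
    have "gram n u i j * gram n (ancilla_state K) i j = of_real ((1 - \<epsilon>) / \<sigma> * (1 + \<sigma>))"
      using True diag unfolding gram_ancilla_state[OF that] \<sigma>_def[symmetric] by simp
    also have "\<dots> = 1"
      by (simp only: unit_diag of_real_1)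
    finally show ?thesis
      using True \<open>gram m \<chi> i i = 1\<close> by simp
  next
    case False
    then show ?thesis
      using u that \<open>\<sigma> > 0\<close> unfolding gram_ancilla_state[OF that] \<sigma>_def[symmetric] A_def
      by simp
  qed
  ultimately show ?thesis
    by blast
qed

lemma sum_lessThan_mult: "(\<Sum>k<a * b. f k) = (\<Sum>x<a. \<Sum>y<b. f (x * b + y))" for a b :: nat
proof (induction a)
  case (Suc a)
  have "(\<Sum>k<Suc a * b. f k) = (\<Sum>k<a * b. f k) + (\<Sum>k\<in>{a * b..<a * b + b}. f k)"
    by (simp add: add.commute lessThan_atLeast0 sum.atLeastLessThan_concat)
  also have "(\<Sum>k\<in>{a * b..<a * b + b}. f k) = (\<Sum>y<b. f (a * b + y))"
    using sum.shift_bounds_nat_ivl[of f 0 "a * b" b] by (simp add: lessThan_atLeast0 add.commute)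
  finally show ?case
    using Suc by simp
qed simp

lemma gram_tensor:
  "gram (dA * dB) (\<lambda>i k. u i (k div dB) * v i (k mod dB)) i j = gram dA u i j * gram dB v i j"
proof -
  have "gram (dA * dB) (\<lambda>i k. u i (k div dB) * v i (k mod dB)) i j
      = (\<Sum>x<dA. \<Sum>y<dB. cnj (u i x * v i y) * (u j x * v j y))"
    unfolding gram_def cinner_def sum_lessThan_mult using tensor_index(2,3) by simp
  also have "\<dots> = gram dA u i j * gram dB v i j"
    unfolding gram_def cinner_def sum_product by (simp add: mult_ac)
  finally show ?thesis .
qed

text \<open>\<open>\<Gamma> \<psi> = \<Sum>\<^sub>i c\<^sub>i u\<^sub>i \<otimes> v\<^sub>i\<close>, where \<open>c = M \<psi>\<close> are the coordinates of \<open>\<psi>\<close> with respect to the \<open>\<chi>\<^sub>i\<close>.\<close>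
definition tensor_embedding ::
  "nat \<Rightarrow> nat \<Rightarrow> (nat \<Rightarrow> nat \<Rightarrow> complex) \<Rightarrow> (nat \<Rightarrow> nat \<Rightarrow> complex) \<Rightarrow> (nat \<Rightarrow> nat \<Rightarrow> complex)
    \<Rightarrow> nat \<Rightarrow> nat \<Rightarrow> complex" where
  "tensor_embedding n dB M u v k a = (\<Sum>i<n. M i a * (u i (k div dB) * v i (k mod dB)))"

lemma mat_vec_tensor_embedding:
  "mat_vec d (tensor_embedding n dB M u v) \<psi>
     = (\<lambda>k. \<Sum>i<n. mat_vec d M \<psi> i * u i (k div dB) * v i (k mod dB))"
  unfolding mat_vec_def tensor_embedding_def
  by (simp add: sum_distrib_left sum_distrib_right sum.swap[of _ "{..<d}"] mult_ac)

lemma isometry_tensor_embedding: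
  assumes coord: "coordinate_matrix d n \<chi> M"
    and hadamard: "\<forall>i<n. \<forall>j<n. gram dA u i j * gram dB v i j = gram d \<chi> i j"
  shows "isometry d (dA * dB) (tensor_embedding n dB M u v)"
  unfolding isometry_def
proof (intro allI impI)
  fix a b assume "a < d" "b < d"
  have "(\<Sum>k<dA * dB. cnj (tensor_embedding n dB M u v k a) * tensor_embedding n dB M u v k b)
      = (\<Sum>i<n. \<Sum>j<n. cnj (M i a) * M j b * gram (dA * dB) (\<lambda>i k. u i (k div dB) * v i (k mod dB)) i j)"
    unfolding tensor_embedding_def cinner_combination[symmetric] cinner_def ..
  also have "\<dots> = (\<Sum>i<n. \<Sum>j<n. cnj (M i a) * M j b * gram d \<chi> i j)"
    unfolding gram_tensor using hadamard by simp
  also have "\<dots> = cinner d (\<lambda>x. if x = a then 1 else 0) (\<lambda>x. if x = b then 1 else 0)"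
    unfolding cinner_combination[symmetric] using coord unfolding coordinate_matrix_def
    by (intro cinner_cong) auto
  also have "\<dots> = (if a = b then 1 else 0)"
    using \<open>a < d\<close> cinner_indicator_left by auto
  finally show "(\<Sum>k<dA * dB. cnj (tensor_embedding n dB M u v k a) * tensor_embedding n dB M u v k b)
      = (if a = b then 1 else 0)" .
qed

theorem proposition1:
  fixes d :: nat and \<chi> :: "nat \<Rightarrow> nat \<Rightarrow> complex"
  assumes pure: "\<forall>i<d. unit_vector d (\<chi> i)"
    and lin_indep: "\<forall>c :: nat \<Rightarrow> complex.
              (\<forall>j<d. (\<Sum>i<d. c i * \<chi> i j) = 0) \<longrightarrow> (\<forall>i<d. c i = 0)"
    and spanning: "\<forall>\<psi> :: nat \<Rightarrow> complex. \<exists>c :: nat \<Rightarrow> complex.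
              \<forall>j<d. \<psi> j = (\<Sum>i<d. c i * \<chi> i j)"
  shows "\<exists>\<Gamma>. isometry d (d * d) \<Gamma> \<and>
           (\<forall>\<rho>. density_op d \<rho> \<longrightarrow> NN d \<chi> d \<rho> = SN d d (conj_by d \<Gamma> \<rho>))"
  \<comment> \<open>The equality holds for every \<open>\<rho>\<close>.\<close>
proof -
  have indep: "lin_independent d d \<chi>"
    using lin_indep unfolding lin_independent_def .
  obtain M where coord: "coordinate_matrix d d \<chi> M"
    using coordinates_exist[OF spanning] by blast
  obtain K where "K > 0" and frame: "lower_frame_bound d d \<chi> K"
    using lower_frame_bound_exists[OF coord indep] by blast
  obtain u v where indep_u: "lin_independent d d u"
    and dual_v: "has_dual_family d d v"
    and hadamard: "\<forall>i<d. \<forall>j<d. gram d u i j * gram d v i j = gram d \<chi> i j"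
    using gram_hadamard_factorization[OF pure frame \<open>K > 0\<close>] by blast
  let ?\<Gamma> = "tensor_embedding d d M u v"
  have "SR d d (mat_vec d ?\<Gamma> \<psi>) = NR d \<chi> d \<psi>" for \<psi>
    unfolding mat_vec_tensor_embedding SR_eq_card_support[OF indep_u dual_v]
    using coordinates_expand[OF coord] by (intro NR_eq_card_support[OF indep, symmetric]) auto
  then show ?thesis
    using isometry_tensor_embedding[OF coord hadamard] NN_eq_SN_conj_by by blast
qed

end
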